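(* Let $\mathbf{A}\in\mathbb{C}^{N\times N}$ be a nonzero matrix (the weighted adjacency matrix of a graph), and let $\lambda_{\max}$ denote an eigenvalue of $\mathbf{A}$ of largest magnitude, i.e. $|\lambda_{\max}|\ge|\lambda|$ for every eigenvalue $\lambda$ of $\mathbf{A}$. Let $\lambda_m,\lambda_n\in\mathbb{C}$ be two distinct eigenvalues of $\mathbf{A}$ with corresponding eigenvectors $\mathbf{v}_m,\mathbf{v}_n$, normalized so that $\|\mathbf{v}_m\|_1=\|\mathbf{v}_n\|_1=1$. If $\big||\lambda_{\max}|-\lambda_m\big|<\big||\lambda_{\max}|-\lambda_n\big|$ (i.e. $\lambda_m$ is closer than $\lambda_n$ to the real number $|\lambda_{\max}|$ in the complex plane), then $\mathrm{TV}_G(\mathbf{v}_m)<\mathrm{TV}_G(\mathbf{v}_n)$.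
   Context: For a graph signal $\mathbf{s}\in\mathbb{C}^N$, the total variation on the graph is $\mathrm{TV}_G(\mathbf{s})=\|\mathbf{s}-\mathbf{A}^{\mathrm{norm}}\mathbf{s}\|_1$, where $\mathbf{A}^{\mathrm{norm}}=\frac{1}{|\lambda_{\max}|}\mathbf{A}$ is the normalized adjacency matrix. *)

theory Defs
  imports "HOL-Analysis.Analysis"
begin

definition is_eigenvalue :: "complex^'n^'n \<Rightarrow> complex \<Rightarrow> bool" where
  "is_eigenvalue A l \<longleftrightarrow> (\<exists>v. v \<noteq> 0 \<and> A *v v = l *s v)"

definition l1_norm :: "complex^'n \<Rightarrow> real" where
  "l1_norm s = (\<Sum>i\<in>UNIV. cmod (s $ i))"

definition A_norm :: "complex^'n^'n \<Rightarrow> complex \<Rightarrow> complex^'n^'n" where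
  "A_norm A lmax = (1 / cmod lmax) *\<^sub>R A"

definition TV_G :: "complex^'n^'n \<Rightarrow> complex \<Rightarrow> complex^'n \<Rightarrow> real" where
  "TV_G A lmax s = l1_norm (s - A_norm A lmax *v s)"

end

theory Submission
  imports Defs
begin

text \<open>On an eigenvector v with eigenvalue l, the operator I - A / |lmax| acts as the scalar
  (|lmax| - l) / |lmax|, so TV_G v = \<bar>|lmax| - l\<bar> / |lmax| when the l1 norm of v is 1.
  Hence TV_G orders unit eigenvectors by the distance of their eigenvalue from |lmax|.\<close>

lemma l1_norm_scale: "l1_norm (a *s v) = cmod a * l1_norm v"
  unfolding l1_norm_def by (simp add: norm_mult sum_distrib_left)

lemma TV_G_eigenvector:
  assumes eig: "A *v v = l *s v" and pos: "cmod lmax > 0"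
  shows "TV_G A lmax v = cmod (complex_of_real (cmod lmax) - l) / cmod lmax * l1_norm v"
proof -
  let ?c = "complex_of_real (cmod lmax)"
  have "A_norm A lmax *v v = (1 / cmod lmax) *\<^sub>R (A *v v)"
    unfolding A_norm_def by (simp add: vec_eq_iff matrix_vector_mult_def scaleR_sum_right)
  also have "\<dots> = (l / ?c) *s v"
    using eig by (simp add: vec_eq_iff scaleR_conv_of_real[where 'a=complex])
  finally have "v - A_norm A lmax *v v = ((?c - l) / ?c) *s v"
    using pos by (simp add: vec_eq_iff field_simps)
  then show ?thesis
    using pos by (simp add: TV_G_def l1_norm_scale norm_divide)
qed

lemma dominant_eigenvalue_nonzero:
  assumes "\<And>l. is_eigenvalue A l \<Longrightarrow> cmod l \<le> cmod lmax"
    and "is_eigenvalue A l1" and "is_eigenvalue A l2" and "l1 \<noteq> l2"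
  shows "cmod lmax > 0"
proof (rule ccontr)
  assume "\<not> cmod lmax > 0"
  then have "l1 = 0" and "l2 = 0"
    using assms(1)[OF assms(2)] assms(1)[OF assms(3)] by auto
  with assms(4) show False by simp
qed

theorem theorem2:
  fixes A :: "complex^'n^'n" and lmax lm ln :: complex and vm vn :: "complex^'n"
  assumes "A \<noteq> 0"
    and "is_eigenvalue A lmax"
    and "\<And>l. is_eigenvalue A l \<Longrightarrow> cmod l \<le> cmod lmax"
    and "is_eigenvalue A lm" and "is_eigenvalue A ln" and "lm \<noteq> ln"
    and "A *v vm = lm *s vm" and "A *v vn = ln *s vn"
    and "l1_norm vm = 1" and "l1_norm vn = 1"
    and "cmod (complex_of_real (cmod lmax) - lm) < cmod (complex_of_real (cmod lmax) - ln)"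
  shows "TV_G A lmax vm < TV_G A lmax vn"
proof -
  have pos: "cmod lmax > 0"
    using dominant_eigenvalue_nonzero[OF assms(3-6)] .
  show ?thesis
    unfolding TV_G_eigenvector[OF assms(7) pos] TV_G_eigenvector[OF assms(8) pos] assms(9,10)
    using assms(11) pos by (simp add: divide_strict_right_mono)
qed

end
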